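(* In the setting described in the context, let $\lambda^*$ be a minimizer of the dual function $g(\lambda)$ over $\lambda\succeq 0$ (a global optimum of the dual problem). Then $\|\lambda^*\|_2$ is upper bounded by a quantity $\lambda_{\max}$ which is $O(N^2)$ as a function of the number of channels $N$.
   Context: Setting: a source communicates with $K$ users through a single relay over $N$ channels, with user weights $w_k\ge0$, $\sum_k w_k=1$; nonnegative channel power gains $a_m$, $b_{nk}$, $c_{mk}$ ($1\le m,n\le N$, $1\le k\le K$); power limits $P_s,P_r,P_t>0$. Logarithms are base 2. Relaxed problem (P'): maximize $\sum_{m,n,k}\frac{w_k}{2}\tilde\phi_{mnk}\min\{\log(1+a_mP^s_{mnk}/\tilde\phi_{mnk}),\log(1+c_{mk}P^s_{mnk}/\tilde\phi_{mnk}+b_{nk}P^r_{mnk}/\tilde\phi_{mnk})\}$ (terms with $\tilde\phi_{mnk}=0$ are $0$) over $\tilde\phi_{mnk}\in[0,1]$ with $\sum_{n,k}\tilde\phi_{mnk}=1\ \forall m$, $\sum_{m,k}\tilde\phi_{mnk}=1\ \forall n$, and $P^s_{mnk},P^r_{mnk}\ge0$ with $\sum P^s_{mnk}\le P_s$, $\sum P^r_{mnk}\le P_r$, $\sum(P^s_{mnk}+P^r_{mnk})\le P_t$. For $\lambda=(\lambda_s,\lambda_r,\lambda_t)\succeq0$ (multipliers of the three power constraints), the dual function is $g(\lambda)=\max[\text{objective of (P')}-(\lambda_s+\lambda_t)\sum P^s_{mnk}-(\lambda_r+\lambda_t)\sum P^r_{mnk}]+\lambda_sP_s+\lambda_rP_r+\lambda_tP_t$,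 maximizing over all feasible $\tilde\phi$ and nonnegative powers. It is assumed throughout that every power constraint that is active at optimality is strictly active (remains active under small perturbations of the power limits). *)

theory Defs
  imports "HOL-Analysis.Analysis"
begin

text \<open>Indices: source channels m < N, relay channels n < N, users k < K (0-based).
  a :: nat => real (a_m), b :: nat => nat => real (b_{nk}), c :: nat => nat => real (c_{mk}).
  Allocation variables phi, Ps, Pr :: nat => nat => nat => real, indexed m n k.\<close>

definition feasible_alloc ::
  "nat \<Rightarrow> nat \<Rightarrow> (nat \<Rightarrow> nat \<Rightarrow> nat \<Rightarrow> real) \<Rightarrow> (nat \<Rightarrow> nat \<Rightarrow> nat \<Rightarrow> real)
   \<Rightarrow> (nat \<Rightarrow> nat \<Rightarrow> nat \<Rightarrow> real) \<Rightarrow> bool" where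
  "feasible_alloc N K phi Ps Pr \<longleftrightarrow>
     (\<forall>m<N. \<forall>n<N. \<forall>k<K. 0 \<le> phi m n k \<and> phi m n k \<le> 1 \<and> 0 \<le> Ps m n k \<and> 0 \<le> Pr m n k) \<and>
     (\<forall>m<N. (\<Sum>n<N. \<Sum>k<K. phi m n k) = 1) \<and>
     (\<forall>n<N. (\<Sum>m<N. \<Sum>k<K. phi m n k) = 1)"

definition rate_term ::
  "real \<Rightarrow> real \<Rightarrow> real \<Rightarrow> real \<Rightarrow> real \<Rightarrow> real \<Rightarrow> real \<Rightarrow> real" where
  "rate_term wk am bnk cmk ph ps pr =
     (if ph = 0 then 0
      else wk / 2 * ph * min (log 2 (1 + am * ps / ph))
                             (log 2 (1 + cmk * ps / ph + bnk * pr / ph)))"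

definition objective ::
  "nat \<Rightarrow> nat \<Rightarrow> (nat \<Rightarrow> real) \<Rightarrow> (nat \<Rightarrow> real) \<Rightarrow> (nat \<Rightarrow> nat \<Rightarrow> real) \<Rightarrow> (nat \<Rightarrow> nat \<Rightarrow> real)
   \<Rightarrow> (nat \<Rightarrow> nat \<Rightarrow> nat \<Rightarrow> real) \<Rightarrow> (nat \<Rightarrow> nat \<Rightarrow> nat \<Rightarrow> real) \<Rightarrow> (nat \<Rightarrow> nat \<Rightarrow> nat \<Rightarrow> real) \<Rightarrow> real" where
  "objective N K w a b c phi Ps Pr =
     (\<Sum>m<N. \<Sum>n<N. \<Sum>k<K. rate_term (w k) (a m) (b n k) (c m k) (phi m n k) (Ps m n k) (Pr m n k))"

definition total3 :: "nat \<Rightarrow> nat \<Rightarrow> (nat \<Rightarrow> nat \<Rightarrow> nat \<Rightarrow> real) \<Rightarrow> real" where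
  "total3 N K P = (\<Sum>m<N. \<Sum>n<N. \<Sum>k<K. P m n k)"

text \<open>Dual function g(lambda_s, lambda_r, lambda_t), valued in the extended reals
  (the supremum may be +infinity).\<close>
definition dual_fun ::
  "nat \<Rightarrow> nat \<Rightarrow> (nat \<Rightarrow> real) \<Rightarrow> (nat \<Rightarrow> real) \<Rightarrow> (nat \<Rightarrow> nat \<Rightarrow> real) \<Rightarrow> (nat \<Rightarrow> nat \<Rightarrow> real)
   \<Rightarrow> real \<Rightarrow> real \<Rightarrow> real \<Rightarrow> real \<Rightarrow> real \<Rightarrow> real \<Rightarrow> ereal" where
  "dual_fun N K w a b c PsL PrL PtL ls lr lt =
     (SUP x \<in> {(phi, Ps, Pr). feasible_alloc N K phi Ps Pr}.
        (case x of (phi, Ps, Pr) \<Rightarrow>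
           ereal (objective N K w a b c phi Ps Pr - (ls + lt) * total3 N K Ps - (lr + lt) * total3 N K Pr)))
     + ereal (ls * PsL + lr * PrL + lt * PtL)"

end

theory Submission
  imports Defs
begin

text \<open>Zero powers are always feasible, so the dual function is at least
  \<open>\<lambda>\<^sub>s P\<^sub>s + \<lambda>\<^sub>r P\<^sub>r + \<lambda>\<^sub>t P\<^sub>t\<close>.  On the other hand
  \<open>log (1 + x) \<le> x / ln 2\<close> bounds the objective by \<open>G / ln 2\<close> times the total source
  power, so at \<open>\<lambda> = (G / ln 2, 0, 0)\<close> the dual function is at most \<open>G P\<^sub>s / ln 2\<close>.
  A dual minimiser therefore satisfies
  \<open>\<lambda>\<^sub>s P\<^sub>s + \<lambda>\<^sub>r P\<^sub>r + \<lambda>\<^sub>t P\<^sub>t \<le> G P\<^sub>s / ln 2\<close>, a bound independent of \<open>N\<close>.\<close>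

lemma log2_one_plus_le: "0 \<le> x \<Longrightarrow> log 2 (1 + x) \<le> x / ln 2"
  by (simp add: log_def divide_right_mono ln_add_one_self_le_self)

lemma rate_term_le_source_power:
  fixes wk am bnk cmk ph ps pr :: real
  assumes "0 \<le> wk" "0 \<le> am" "0 \<le> ph" "0 \<le> ps"
  shows "rate_term wk am bnk cmk ph ps pr \<le> wk / 2 * am * ps / ln 2"
proof (cases "ph = 0")
  case True
  then show ?thesis using assms by (simp add: rate_term_def)
next
  case False
  with assms have ph: "ph > 0" by linarith
  define x where "x = am * ps / ph"
  have x: "0 \<le> x" using assms ph by (simp add: x_def)
  have scale: "0 \<le> wk / 2 * ph" using assms by simp
  have "rate_term wk am bnk cmk ph ps pr
      = wk / 2 * ph * min (log 2 (1 + x)) (log 2 (1 + cmk * ps / ph + bnk * pr / ph))"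
    using False by (simp add: rate_term_def x_def)
  also have "\<dots> \<le> wk / 2 * ph * log 2 (1 + x)"
    using scale by (intro mult_left_mono) auto
  also have "\<dots> \<le> wk / 2 * ph * (x / ln 2)"
    using scale log2_one_plus_le[OF x] by (rule mult_left_mono[rotated])
  also have "\<dots> = wk / 2 * am * ps / ln 2"
    using ph by (simp add: x_def)
  finally show ?thesis .
qed

lemma rate_term_zero_power [simp]: "rate_term wk am bnk cmk ph 0 0 = 0"
  by (simp add: rate_term_def)

lemma objective_le_total_source_power:
  assumes "feasible_alloc N K phi Ps Pr"
    and "\<forall>k<K. 0 \<le> w k \<and> w k \<le> 1" and "\<forall>m<N. 0 \<le> a m \<and> a m \<le> G"
  shows "objective N K w a b c phi Ps Pr \<le> G / ln 2 * total3 N K Ps"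
proof -
  have "rate_term (w k) (a m) (b n k) (c m k) (phi m n k) (Ps m n k) (Pr m n k)
          \<le> G / ln 2 * Ps m n k" if "m < N" "n < N" "k < K" for m n k
  proof -
    have "w k / 2 * a m \<le> 1 * G"
      using assms(2,3) that by (intro mult_mono) auto
    then have weighted: "w k / 2 * a m * Ps m n k \<le> G * Ps m n k"
      using assms(1) that unfolding feasible_alloc_def by (intro mult_right_mono) auto
    have "rate_term (w k) (a m) (b n k) (c m k) (phi m n k) (Ps m n k) (Pr m n k)
            \<le> w k / 2 * a m * Ps m n k / ln 2"
      using assms that unfolding feasible_alloc_def by (intro rate_term_le_source_power) auto
    also have "\<dots> \<le> G * Ps m n k / ln 2"
      using weighted by (rule divide_right_mono) simp
    finally show ?thesis by simp
  qed
  then show ?thesis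
    unfolding objective_def total3_def sum_distrib_left by (intro sum_mono) auto
qed

lemma feasible_alloc_diagonal:
  assumes "0 < K"
  shows "feasible_alloc N K (\<lambda>m n k. if n = m \<and> k = 0 then 1 else 0) (\<lambda>_ _ _. 0) (\<lambda>_ _ _. 0)"
proof -
  have inner: "(\<Sum>k<K. if n = m \<and> k = 0 then 1 else 0 :: real) = (if n = m then 1 else 0)"
    for m n
    using assms by (auto simp: sum.delta)
  show ?thesis
    unfolding feasible_alloc_def by (simp add: inner sum.delta sum.delta')
qed

lemma dual_fun_ge_price:
  assumes "0 < K"
  shows "ereal (ls * PsL + lr * PrL + lt * PtL) \<le> dual_fun N K w a b c PsL PrL PtL ls lr lt"
proof -
  let ?phi = "\<lambda>m n k. if n = m \<and> k = 0 then 1 else 0 :: real" and ?Z = "\<lambda>_ _ _. 0 :: real"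
  have "0 \<le> (SUP x \<in> {(phi, Ps, Pr). feasible_alloc N K phi Ps Pr}.
                case x of (phi, Ps, Pr) \<Rightarrow> ereal (objective N K w a b c phi Ps Pr
                  - (ls + lt) * total3 N K Ps - (lr + lt) * total3 N K Pr))"
    using feasible_alloc_diagonal[OF assms, of N]
    by (intro SUP_upper2[where i = "(?phi, ?Z, ?Z)"])
       (auto simp: objective_def total3_def)
  then show ?thesis
    unfolding dual_fun_def by (simp add: add_increasing)
qed

lemma dual_fun_le_at_source_price:
  assumes "\<forall>k<K. 0 \<le> w k \<and> w k \<le> 1" and "\<forall>m<N. 0 \<le> a m \<and> a m \<le> G"
  shows "dual_fun N K w a b c PsL PrL PtL (G / ln 2) 0 0 \<le> ereal (G / ln 2 * PsL)"
proof -
  have "(SUP x \<in> {(phi, Ps, Pr). feasible_alloc N K phi Ps Pr}.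
           case x of (phi, Ps, Pr) \<Rightarrow> ereal (objective N K w a b c phi Ps Pr
             - (G / ln 2 + 0) * total3 N K Ps - (0 + 0) * total3 N K Pr)) \<le> 0"
  proof (rule SUP_least, clarify)
    fix phi Ps Pr assume "feasible_alloc N K phi Ps Pr"
    then show "ereal (objective N K w a b c phi Ps Pr
                 - (G / ln 2 + 0) * total3 N K Ps - (0 + 0) * total3 N K Pr) \<le> 0"
      using objective_le_total_source_power[OF _ assms] by simp
  qed
  then show ?thesis
    unfolding dual_fun_def by (simp add: add_decreasing)
qed

lemma dual_minimizer_price_bound:
  assumes "0 < K" and "0 \<le> G"
    and "\<forall>k<K. 0 \<le> w k \<and> w k \<le> 1" and "\<forall>m<N. 0 \<le> a m \<and> a m \<le> G"
    and "\<forall>ls' lr' lt'. 0 \<le> ls' \<longrightarrow> 0 \<le> lr' \<longrightarrow> 0 \<le> lt' \<longrightarrow>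
           dual_fun N K w a b c PsL PrL PtL ls lr lt \<le> dual_fun N K w a b c PsL PrL PtL ls' lr' lt'"
  shows "ls * PsL + lr * PrL + lt * PtL \<le> G / ln 2 * PsL"
proof -
  have "ereal (ls * PsL + lr * PrL + lt * PtL) \<le> dual_fun N K w a b c PsL PrL PtL ls lr lt"
    using assms(1) by (rule dual_fun_ge_price)
  also have "\<dots> \<le> dual_fun N K w a b c PsL PrL PtL (G / ln 2) 0 0"
    using assms(2,5) by simp
  also have "\<dots> \<le> ereal (G / ln 2 * PsL)"
    using assms(3,4) by (rule dual_fun_le_at_source_price)
  finally show ?thesis by simp
qed

lemma norm3_le_sum:
  fixes x y z :: real
  assumes "0 \<le> x" "0 \<le> y" "0 \<le> z"
  shows "sqrt (x\<^sup>2 + y\<^sup>2 + z\<^sup>2) \<le> x + y + z"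
  using assms by (intro real_le_lsqrt) (auto simp: power2_eq_square algebra_simps)

lemma weight_le_one:
  fixes K :: nat
  assumes "\<forall>k<K. 0 \<le> w k" "(\<Sum>k<K. w k) = 1" "k < K"
  shows "w k \<le> (1::real)"
proof -
  have "w k \<le> (\<Sum>k<K. w k)"
    by (rule member_le_sum) (use assms in auto)
  then show ?thesis using assms(2) by simp
qed

theorem lemma3:
  fixes K :: nat and w :: "nat \<Rightarrow> real" and PsL PrL PtL G :: real
  assumes "\<forall>k<K. 0 \<le> w k" and "(\<Sum>k<K. w k) = 1"
    and "PsL > 0" and "PrL > 0" and "PtL > 0" and "G \<ge> 0"
  shows "\<exists>C::real. \<forall>(N::nat) (a::nat \<Rightarrow> real) (b::nat \<Rightarrow> nat \<Rightarrow> real) (c::nat \<Rightarrow> nat \<Rightarrow> real)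
           (ls::real) (lr::real) (lt::real).
           N \<ge> 1 \<longrightarrow>
           (\<forall>m<N. 0 \<le> a m \<and> a m \<le> G) \<longrightarrow>
           (\<forall>n<N. \<forall>k<K. 0 \<le> b n k \<and> b n k \<le> G) \<longrightarrow>
           (\<forall>m<N. \<forall>k<K. 0 \<le> c m k \<and> c m k \<le> G) \<longrightarrow>
           0 \<le> ls \<longrightarrow> 0 \<le> lr \<longrightarrow> 0 \<le> lt \<longrightarrow>
           (\<forall>ls' lr' lt'. 0 \<le> ls' \<longrightarrow> 0 \<le> lr' \<longrightarrow> 0 \<le> lt' \<longrightarrow>
              dual_fun N K w a b c PsL PrL PtL ls lr lt \<le> dual_fun N K w a b c PsL PrL PtL ls' lr' lt') \<longrightarrow>
           sqrt (ls\<^sup>2 + lr\<^sup>2 + lt\<^sup>2) \<le> C * (real N)\<^sup>2"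
proof (intro exI allI impI)
  define B where "B = G / ln 2 * PsL"
  have K: "0 < K" using assms(2) by (cases K) auto
  have w: "\<forall>k<K. 0 \<le> w k \<and> w k \<le> 1" using assms(1,2) weight_le_one by blast
  fix N :: nat and a :: "nat \<Rightarrow> real" and b c :: "nat \<Rightarrow> nat \<Rightarrow> real" and ls lr lt :: real
  assume N: "N \<ge> 1" and a: "\<forall>m<N. 0 \<le> a m \<and> a m \<le> G"
    and l: "0 \<le> ls" "0 \<le> lr" "0 \<le> lt"
    and opt: "\<forall>ls' lr' lt'. 0 \<le> ls' \<longrightarrow> 0 \<le> lr' \<longrightarrow> 0 \<le> lt' \<longrightarrow>
              dual_fun N K w a b c PsL PrL PtL ls lr lt \<le> dual_fun N K w a b c PsL PrL PtL ls' lr' lt'"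
  have price: "ls * PsL + lr * PrL + lt * PtL \<le> B"
    unfolding B_def using dual_minimizer_price_bound[OF K assms(6) w a opt] .
  have "0 \<le> ls * PsL" "0 \<le> lr * PrL" "0 \<le> lt * PtL"
    using l assms(3-5) by simp_all
  then have "ls \<le> B / PsL" "lr \<le> B / PrL" "lt \<le> B / PtL"
    using price assms(3-5) by (simp_all add: pos_le_divide_eq)
  then have "sqrt (ls\<^sup>2 + lr\<^sup>2 + lt\<^sup>2) \<le> B / PsL + B / PrL + B / PtL"
    using norm3_le_sum[OF l] by linarith
  also have "\<dots> \<le> (B / PsL + B / PrL + B / PtL) * (real N)\<^sup>2"
  proof -
    have "0 \<le> B / PsL + B / PrL + B / PtL" using assms(3-6) by (simp add: B_def)
    moreover have "1 \<le> (real N)\<^sup>2" using N by simp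
    ultimately show ?thesis by (simp add: mult_le_cancel_left1)
  qed
  finally show "sqrt (ls\<^sup>2 + lr\<^sup>2 + lt\<^sup>2) \<le> (B / PsL + B / PrL + B / PtL) * (real N)\<^sup>2" .
qed

end
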